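(* Let $T,N,N',L,L'$ be positive integers, let $\lambda\ge0$ and $\eta>0$ be real numbers, and let $p_1<p_2<\dots<p_L$ be primes with $p_i\ge 2L(L+T-1)\eta$ for every $i\in[L]$ and $p_L> LN'/L'-2L-2T+2$. Let $N_i=p_i+2L+2T-2$ for $i\in[L]$, and suppose $\lambda<\dfrac{N'-L-1/\eta}{N_L/L-N'/L'}$. Then $$\left(\frac{N_L\lambda}{L}+\sum_{i=1}^L\frac{N_i}{p_i}\right)^{-1}>\left(N'\left(\frac{\lambda}{L'}+1\right)\right)^{-1}.$$ *)

theory Defs
  imports Complex_Main "HOL-Computational_Algebra.Primes"
begin

end

theory Submission
  imports Defs
begin

text \<open>Write \<open>c = 2L + 2T - 2\<close>, so \<open>N\<^sub>i = p\<^sub>i + c\<close>. The lower bound on the primes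
  says \<open>c \<le> p\<^sub>i / (L\<eta>)\<close>, hence \<open>N\<^sub>i / p\<^sub>i \<le> 1 + 1/(L\<eta>)\<close> and the sum is at most
  \<open>L + 1/\<eta>\<close>. The bound on \<open>p\<^sub>L\<close> makes \<open>N\<^sub>L/L - N'/L'\<close> positive, so multiplying out the
  bound on \<open>\<lambda>\<close> gives \<open>N\<^sub>L\<lambda>/L + \<Sum> N\<^sub>i/p\<^sub>i < N'(\<lambda>/L' + 1)\<close>; both sides are positive and
  inversion reverses the inequality. Primality of the \<open>p\<^sub>i\<close> is only needed for
  \<open>p\<^sub>i > 0\<close>.\<close>

lemma shifted_ratio_le:
  fixes x c k :: real
  assumes "0 < x" "0 < k" "c * k \<le> x"
  shows "(x + c) / x \<le> 1 + 1 / k"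
proof -
  have "c / x \<le> 1 / k"
    using assms by (simp add: divide_simps mult.commute)
  moreover have "(x + c) / x = 1 + c / x"
    using assms(1) by (simp add: field_simps)
  ultimately show ?thesis by simp
qed

lemma sum_shifted_ratio_le:
  fixes x :: "'a \<Rightarrow> real" and c \<eta> :: real
  assumes "finite A" "A \<noteq> {}" "0 < \<eta>"
    and "\<And>i. i \<in> A \<Longrightarrow> 0 < x i \<and> c * (real (card A) * \<eta>) \<le> x i"
  shows "(\<Sum>i\<in>A. (x i + c) / x i) \<le> real (card A) + 1 / \<eta>"
proof -
  have card_pos: "0 < real (card A)"
    using assms(1,2) by (simp add: card_gt_0_iff)
  have "(\<Sum>i\<in>A. (x i + c) / x i) \<le> (\<Sum>i\<in>A. 1 + 1 / (real (card A) * \<eta>))"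
    using assms(3,4) card_pos by (intro sum_mono shifted_ratio_le) auto
  also have "\<dots> = real (card A) + 1 / \<eta>"
    using card_pos by (simp add: field_simps)
  finally show ?thesis .
qed

lemma add_lt_of_lt_divide_diff:
  fixes a b t M S :: real
  assumes "b < a" "t < (M - S) / (a - b)"
  shows "a * t + S < b * t + M"
  using assms by (simp add: pos_less_divide_eq algebra_simps)

theorem lemma4:
  fixes T N N' L L' :: nat and lam \<eta> :: real and p :: "nat \<Rightarrow> nat"
  assumes "T > 0" "N > 0" "N' > 0" "L > 0" "L' > 0"
    and "lam \<ge> 0" "\<eta> > 0"
    and "\<And>i. i \<in> {1..L} \<Longrightarrow> prime (p i)"
    and "\<And>i j. i \<in> {1..L} \<Longrightarrow> j \<in> {1..L} \<Longrightarrow> i < j \<Longrightarrow> p i < p j"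
    and "\<And>i. i \<in> {1..L} \<Longrightarrow> real (p i) \<ge> 2 * real L * (real L + real T - 1) * \<eta>"
    and "real (p L) > real L * real N' / real L' - 2 * real L - 2 * real T + 2"
    and "lam < (real N' - real L - 1 / \<eta>) /
              ((real (p L) + 2 * real L + 2 * real T - 2) / real L - real N' / real L')"
  shows "inverse ((real (p L) + 2 * real L + 2 * real T - 2) * lam / real L
                  + (\<Sum>i=1..L. (real (p i) + 2 * real L + 2 * real T - 2) / real (p i)))
         > inverse (real N' * (lam / real L' + 1))"
proof -
  define c where "c = 2 * real L + 2 * real T - 2"
  define S where "S = (\<Sum>i=1..L. (real (p i) + c) / real (p i))"
  define a where "a = (real (p L) + c) / real L"
  have N_eq: "\<And>x. x + 2 * real L + 2 * real T - 2 = x + c"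
    by (simp add: c_def)
  have c_pos: "0 < c"
    using assms(1,4) by (simp add: c_def)
  have p_pos: "0 < real (p i)" if "i \<in> {1..L}" for i
    using assms(8)[OF that] prime_gt_0_nat by simp
  have S_le: "S \<le> real L + 1 / \<eta>"
    using sum_shifted_ratio_le[where A = "{1..L}" and x = "\<lambda>i. real (p i)" and c = c] assms(4,7,10) p_pos
    by (simp add: S_def c_def algebra_simps)
  have S_pos: "0 < S"
    unfolding S_def using assms(4) p_pos c_pos by (intro sum_pos) (auto intro: add_pos_pos)
  have a_gt: "real N' / real L' < a"
    using assms(4,11) by (simp add: a_def c_def field_simps)
  have "lam < (real N' - (real L + 1 / \<eta>)) / (a - real N' / real L')"
    using assms(12) unfolding N_eq a_def by (simp add: diff_diff_eq)
  also have "\<dots> \<le> (real N' - S) / (a - real N' / real L')"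
    using S_le a_gt by (intro divide_right_mono) auto
  finally have "a * lam + S < real N' / real L' * lam + real N'"
    using a_gt by (rule add_lt_of_lt_divide_diff[rotated])
  moreover have "0 < a * lam + S"
    using a_gt S_pos assms(6)
    by (metis add_nonneg_pos divide_nonneg_nonneg mult_nonneg_nonneg of_nat_0_le_iff
        order.strict_trans1 order.strict_implies_order)
  ultimately have "inverse (real N' / real L' * lam + real N') < inverse (a * lam + S)"
    by (rule less_imp_inverse_less)
  then show ?thesis
    unfolding N_eq a_def S_def by (simp add: algebra_simps)
qed

end
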